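(* Let $K\in L_2(\mathbb R)$ be a kernel (satisfying the standing assumptions below) with $S_K=0$. Then for every probability density $f\in L_2(\mathbb R)$, $\lim_{n\to\infty} n\,\Phi(n,f,K)=\infty$.
   Context: A kernel is an integrable function $K:\mathbb R\to\mathbb R$ with $\int K=1$; standing assumptions: $K$ is bounded, continuous at $0$, and $\int K^2<2K(0)$. For a sample $X_1,\dots,X_n$ i.i.d. with density $f$, bandwidth $h>0$, $f_{n,K,h}(x)=\frac1n\sum_{i=1}^n K_h(x-X_i)$ with $K_h(x)=K(x/h)/h$. $\mathrm{MISE}_f(f_{n,K,h})=E_f\int (f_{n,K,h}-f)^2$, and $\Phi(n,f,K)=\min_{h>0}\mathrm{MISE}_f(f_{n,K,h})$ (the minimum exists under the standing assumptions). $\varphi_K(t)=\int e^{itx}K(x)dx$ and $S_K=\inf\{t\ge0: |\varphi_K(t)-1|\ne0\}$. *)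

theory Defs
  imports "HOL-Probability.Probability"
begin

definition is_kernel :: "(real \<Rightarrow> real) \<Rightarrow> bool" where
  "is_kernel K \<longleftrightarrow>
     integrable lborel K \<and> (LINT x|lborel. K x) = 1 \<and>
     (\<exists>B. \<forall>x. \<bar>K x\<bar> \<le> B) \<and> isCont K 0 \<and>
     (LINT x|lborel. (K x)\<^sup>2) < 2 * K 0"

definition is_density :: "(real \<Rightarrow> real) \<Rightarrow> bool" where
  "is_density f \<longleftrightarrow> f \<in> borel_measurable lborel \<and> (\<forall>x. 0 \<le> f x) \<and>
     integrable lborel f \<and> (LINT x|lborel. f x) = 1"

definition kde :: "nat \<Rightarrow> (real \<Rightarrow> real) \<Rightarrow> real \<Rightarrow> (nat \<Rightarrow> real) \<Rightarrow> real \<Rightarrow> real" where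
  "kde n K h X x = (\<Sum>i<n. K ((x - X i) / h) / h) / real n"

definition sample :: "nat \<Rightarrow> (real \<Rightarrow> real) \<Rightarrow> (nat \<Rightarrow> real) measure" where
  "sample n f = PiM {..<n} (\<lambda>_. density lborel (\<lambda>x. ennreal (f x)))"

definition MISE :: "nat \<Rightarrow> (real \<Rightarrow> real) \<Rightarrow> (real \<Rightarrow> real) \<Rightarrow> real \<Rightarrow> ennreal" where
  "MISE n f K h =
     (\<integral>\<^sup>+ X. (\<integral>\<^sup>+ x. ennreal ((kde n K h X x - f x)\<^sup>2) \<partial>lborel) \<partial>sample n f)"

text \<open>Phi(n,f,K) = min over h > 0 of the MISE (the minimum exists under the standing
  assumptions, so it coincides with the infimum).\<close>
definition Phi :: "nat \<Rightarrow> (real \<Rightarrow> real) \<Rightarrow> (real \<Rightarrow> real) \<Rightarrow> ennreal" where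
  "Phi n f K = (INF h\<in>{0<..}. MISE n f K h)"

definition char_fun :: "(real \<Rightarrow> real) \<Rightarrow> real \<Rightarrow> complex" where
  "char_fun K t = (LINT x|lborel. cis (t * x) * complex_of_real (K x))"

definition S_K :: "(real \<Rightarrow> real) \<Rightarrow> real" where
  "S_K K = Inf {t. 0 \<le> t \<and> cmod (char_fun K t - 1) \<noteq> 0}"

end

theory Submission
  imports Defs
begin

(*
  Let f be a square-integrable density and K a kernel with S_K = 0.  Writing
  Y for a random variable with density f, K_h(u) = K(u/h)/h and
  b_h = K_h * f - f for the bias of the estimator, the variance decomposition gives

     n * MISE(n,h) = \<integral> E (K_h(x - Y) - f x)^2 dx + (n - 1) * \<integral> b_h^2 .

  The first term is at least \<integral>K^2/(2h) - \<integral>f^2, which is large for small h.  The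
  second term is at least n \<integral> b_h^2, and \<integral> b_h^2 is bounded away from 0 uniformly in
  h \<ge> \<delta>: for large h because K_h * f becomes small in L2, for h in a compact range
  because the Fourier transform of b_h is \<phi>_f(t) (\<phi>_K(ht) - 1), and S_K = 0 yields a
  frequency s = ht with \<phi>_K(s) \<noteq> 1 at which |\<phi>_f(t)| \<ge> 1/2; this bounds \<integral>|b_h| from
  below, and tails that are uniform in h turn this into a lower bound for \<integral> b_h^2.
  Hence n * MISE(n,h) \<ge> Z for all h > 0 once n is large, i.e. n * \<Phi>(n,f,K) \<rightarrow> \<infinity>.
*)

lemma half_square_le: "a\<^sup>2 / 2 \<le> (a - b)\<^sup>2 + (b::real)\<^sup>2"
proof -
  have "(a - b)\<^sup>2 + b\<^sup>2 - a\<^sup>2 / 2 = (a - 2 * b)\<^sup>2 / 2"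
    by (simp add: power2_eq_square field_simps)
  moreover have "0 \<le> (a - 2 * b)\<^sup>2 / 2" by simp
  ultimately show ?thesis by linarith
qed

lemma abs_le_quadratic:
  fixes l b :: real
  assumes l: "0 < l"
  shows "\<bar>b\<bar> \<le> l / 2 * b\<^sup>2 + 1 / (2 * l)"
proof -
  have "l / 2 * b\<^sup>2 + 1 / (2 * l) - \<bar>b\<bar> = (l * \<bar>b\<bar> - 1)\<^sup>2 / (2 * l)"
    using l by (simp add: power2_eq_square field_simps)
  moreover have "0 \<le> (l * \<bar>b\<bar> - 1)\<^sup>2 / (2 * l)" using l by simp
  ultimately show ?thesis by linarith
qed

lemma ennreal_half: "0 \<le> a \<Longrightarrow> ennreal a / 2 = ennreal (a / 2)"
  by (metis divide_ennreal ennreal_numeral zero_less_numeral)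

lemma ennreal_diff_le:
  assumes b: "0 \<le> b" and le: "ennreal a \<le> X + ennreal b"
  shows "ennreal (a - b) \<le> X"
proof (cases X)
  case (real x)
  then have "ennreal a \<le> ennreal (x + b)" using le b by (simp add: ennreal_plus)
  then have "a \<le> x + b" using real b by (subst (asm) ennreal_le_iff) auto
  then show ?thesis by (subst real(2)) (rule ennreal_leI, simp)
next
  case top then show ?thesis by simp
qed

section \<open>Moments of i.i.d. samples\<close>

lemma (in prob_space) square_expectation_le:
  fixes X :: "'a \<Rightarrow> real"
  assumes "integrable M X" "integrable M (\<lambda>x. (X x)\<^sup>2)"
  shows "(expectation X)\<^sup>2 \<le> expectation (\<lambda>x. (X x)\<^sup>2)"
  using variance_eq[OF assms] variance_positive[of X] by simp

lemma integral_iid_pair: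
  fixes M :: "real measure" and g :: "real \<Rightarrow> real"
  assumes P: "prob_space M" and [measurable]: "g \<in> borel_measurable M"
    and gb: "\<And>y. \<bar>g y\<bar> \<le> C" and ij: "i < n" "j < (n::nat)"
  shows "(\<integral>X. g (X i) * g (X j) \<partial>PiM {..<n} (\<lambda>_. M))
       = (if i = j then (\<integral>y. (g y)\<^sup>2 \<partial>M) else (\<integral>y. g y \<partial>M)\<^sup>2)"
proof -
  interpret prob_space M by fact
  interpret product_sigma_finite "\<lambda>_. M"
    by (simp add: product_sigma_finite_def prob_space_imp_sigma_finite P)
  have gi: "integrable M g" by (rule integrable_const_bound[where B=C]) (use gb in auto)
  have ggi: "integrable M (\<lambda>y. g y * g y)"
  proof (rule integrable_const_bound[where B="C * C"])
    have "\<bar>g y\<bar> * \<bar>g y\<bar> \<le> C * C" for y by (rule mult_mono[OF gb gb]) (use gb[of y] in auto)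
    then show "AE y in M. norm (g y * g y) \<le> C * C" by (simp add: abs_mult)
  qed simp
  define F where "F k = (if k = i \<and> k = j then (\<lambda>y. g y * g y) else if k = i \<or> k = j then g else (\<lambda>y. 1))"
    for k
  have "(\<integral>X. g (X i) * g (X j) \<partial>PiM {..<n} (\<lambda>_. M)) = (\<integral>X. (\<Prod>k<n. F k (X k)) \<partial>PiM {..<n} (\<lambda>_. M))"
  proof (rule Bochner_Integration.integral_cong[OF refl])
    fix X
    have "(\<Prod>k<n. F k (X k)) = (\<Prod>k\<in>{i, j}. F k (X k))"
      by (rule prod.mono_neutral_right) (auto simp: ij F_def)
    then show "g (X i) * g (X j) = (\<Prod>k<n. F k (X k))"
      by (cases "i = j") (auto simp: F_def)
  qed
  also have "\<dots> = (\<Prod>k<n. \<integral>y. F k y \<partial>M)"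
    by (rule product_integral_prod) (auto simp: F_def gi ggi)
  also have "\<dots> = (\<Prod>k\<in>{i, j}. \<integral>y. F k y \<partial>M)"
    by (rule prod.mono_neutral_right) (auto simp: ij F_def prob_space)
  also have "\<dots> = (if i = j then (\<integral>y. (g y)\<^sup>2 \<partial>M) else (\<integral>y. g y \<partial>M)\<^sup>2)"
    by (cases "i = j") (auto simp: F_def power2_eq_square)
  finally show ?thesis .
qed

lemma integral_iid_sum_square:
  fixes M :: "real measure" and g :: "real \<Rightarrow> real"
  assumes P: "prob_space M" and gm[measurable]: "g \<in> borel_measurable M" and gb: "\<And>y. \<bar>g y\<bar> \<le> C"
  shows "(\<integral>X. (\<Sum>i<n. g (X i))\<^sup>2 \<partial>PiM {..<n} (\<lambda>_. M))
         = real n * (\<integral>y. (g y)\<^sup>2 \<partial>M) + real n * (real n - 1) * (\<integral>y. g y \<partial>M)\<^sup>2"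
proof -
  let ?P = "PiM {..<n} (\<lambda>_. M)"
  let ?E2 = "\<integral>y. (g y)\<^sup>2 \<partial>M" and ?E1 = "\<integral>y. g y \<partial>M"
  interpret PP: prob_space ?P by (intro prob_space_PiM) (simp add: P)
  have pint: "integrable ?P (\<lambda>X. g (X i) * g (X j))" if "i < n" "j < n" for i j
  proof (rule PP.integrable_const_bound[where B="C*C"])
    show "AE X in ?P. norm (g (X i) * g (X j)) \<le> C * C"
      using gb by (auto simp: abs_mult intro!: mult_mono order_trans[OF abs_ge_zero gb])
    show "(\<lambda>X. g (X i) * g (X j)) \<in> borel_measurable ?P"
      by (intro borel_measurable_times measurable_compose[OF measurable_component_singleton[where M="\<lambda>_. M"] gm])
         (auto simp: that)
  qed
  have diag: "(\<Sum>j<n. if i = j then ?E2 else ?E1\<^sup>2) = ?E2 + (real n - 1) * ?E1\<^sup>2" if "i < n" for i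
  proof -
    have "(\<Sum>j<n. if i = j then ?E2 else ?E1\<^sup>2) = (\<Sum>j<n. (if i = j then ?E2 - ?E1\<^sup>2 else 0) + ?E1\<^sup>2)"
      by (rule sum.cong) auto
    also have "\<dots> = ?E2 - ?E1\<^sup>2 + real n * ?E1\<^sup>2"
      using that by (simp add: sum.distrib)
    finally show ?thesis by (simp add: algebra_simps)
  qed
  have "(\<integral>X. (\<Sum>i<n. g (X i))\<^sup>2 \<partial>?P) = (\<integral>X. (\<Sum>i<n. \<Sum>j<n. g (X i) * g (X j)) \<partial>?P)"
    by (simp add: power2_eq_square sum_product)
  also have "\<dots> = (\<Sum>i<n. (\<integral>X. (\<Sum>j<n. g (X i) * g (X j)) \<partial>?P))"
    by (rule Bochner_Integration.integral_sum) (auto intro!: integrable_sum pint)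
  also have "\<dots> = (\<Sum>i<n. \<Sum>j<n. (\<integral>X. g (X i) * g (X j) \<partial>?P))"
    by (intro sum.cong refl Bochner_Integration.integral_sum) (auto intro!: pint)
  also have "\<dots> = (\<Sum>i<n. \<Sum>j<n. if i = j then ?E2 else ?E1\<^sup>2)"
    by (simp add: integral_iid_pair[OF P gm gb])
  also have "\<dots> = (\<Sum>i<n. ?E2 + (real n - 1) * ?E1\<^sup>2)"
    by (rule sum.cong[OF refl]) (simp add: diag)
  finally show ?thesis by (simp add: algebra_simps)
qed

lemma square_integral_pos:
  fixes u :: "real \<Rightarrow> real"
  assumes "integrable lborel (\<lambda>x. (u x)\<^sup>2)" "(\<integral>x. u x \<partial>lborel) \<noteq> 0"
  shows "0 < (\<integral>x. (u x)\<^sup>2 \<partial>lborel)"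
proof -
  have "(\<integral>x. (u x)\<^sup>2 \<partial>lborel) \<noteq> 0"
  proof
    assume "(\<integral>x. (u x)\<^sup>2 \<partial>lborel) = 0"
    then have "AE x in lborel. u x = 0"
      using integral_nonneg_eq_0_iff_AE[OF assms(1)] by simp
    then have "(\<integral>x. u x \<partial>lborel) = 0" by (simp add: integral_eq_zero_AE)
    then show False using assms(2) by simp
  qed
  then show ?thesis by (simp add: order_less_le)
qed

lemma nn_integral_swap:
  assumes "sigma_finite_measure M1" "sigma_finite_measure M2"
    "(\<lambda>p. F (fst p) (snd p)) \<in> borel_measurable (M1 \<Otimes>\<^sub>M M2)"
  shows "(\<integral>\<^sup>+x. \<integral>\<^sup>+y. F x y \<partial>M2 \<partial>M1) = (\<integral>\<^sup>+y. \<integral>\<^sup>+x. F x y \<partial>M1 \<partial>M2)"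
proof -
  interpret pair_sigma_finite M1 M2 using assms(1,2) by (simp add: pair_sigma_finite_def)
  show ?thesis using Fubini[OF assms(3)] by simp
qed

lemma nn_integral_rescale:
  fixes G :: "real \<Rightarrow> ennreal"
  assumes [measurable]: "G \<in> borel_measurable borel" and h: "0 < h"
  shows "(\<integral>\<^sup>+x. G ((x - y) / h) \<partial>lborel) = ennreal h * (\<integral>\<^sup>+u. G u \<partial>lborel)"
  using nn_integral_real_affine[of "\<lambda>x. G ((x - y) / h)" h y] h by simp

lemma nn_integral_abs_interval_le:
  fixes b :: "real \<Rightarrow> real"
  assumes l: "0 < l" and R: "0 \<le> R" and [measurable]: "b \<in> borel_measurable borel"
  shows "(\<integral>\<^sup>+x. ennreal \<bar>b x\<bar> * indicator {-R..R} x \<partial>lborel)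
     \<le> ennreal (l / 2) * (\<integral>\<^sup>+x. ennreal ((b x)\<^sup>2) \<partial>lborel) + ennreal (R / l)"
proof -
  have pointwise: "ennreal \<bar>b x\<bar> \<le> ennreal (l / 2) * ennreal ((b x)\<^sup>2) + ennreal (1 / (2 * l))" for x
  proof -
    have "ennreal \<bar>b x\<bar> \<le> ennreal (l / 2 * (b x)\<^sup>2 + 1 / (2 * l))"
      by (rule ennreal_leI) (rule abs_le_quadratic[OF l])
    also have "\<dots> = ennreal (l / 2 * (b x)\<^sup>2) + ennreal (1 / (2 * l))"
      by (rule ennreal_plus) (use l in auto)
    also have "ennreal (l / 2 * (b x)\<^sup>2) = ennreal (l / 2) * ennreal ((b x)\<^sup>2)"
      by (rule ennreal_mult) (use l in auto)
    finally show ?thesis .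
  qed
  have "(\<integral>\<^sup>+x. ennreal \<bar>b x\<bar> * indicator {-R..R} x \<partial>lborel)
      \<le> (\<integral>\<^sup>+x. ennreal (l / 2) * ennreal ((b x)\<^sup>2) + ennreal (1 / (2 * l)) * indicator {-R..R} x \<partial>lborel)"
    by (rule nn_integral_mono) (use pointwise in \<open>auto split: split_indicator\<close>)
  also have "\<dots> = ennreal (l / 2) * (\<integral>\<^sup>+x. ennreal ((b x)\<^sup>2) \<partial>lborel) + ennreal (1 / (2 * l)) * emeasure lborel {-R..R}"
    by (subst nn_integral_add) (auto simp: nn_integral_cmult nn_integral_cmult_indicator)
  also have "ennreal (1 / (2 * l)) * emeasure lborel {-R..R} = ennreal (R / l)"
    using l R by (simp add: ennreal_mult[symmetric] del: ennreal_mult')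
  finally show ?thesis .
qed

text \<open>A lower bound on the L1 norm whose tail beyond R is small gives an explicit
  lower bound on the L2 norm (Cauchy-Schwarz on [-R, R]).\<close>
lemma L2_lower_bound_from_L1:
  fixes b :: "real \<Rightarrow> real"
  assumes [measurable]: "b \<in> borel_measurable borel" and \<eta>: "0 < \<eta>" and R: "0 < R"
    and L1: "ennreal \<eta> \<le> (\<integral>\<^sup>+x. ennreal \<bar>b x\<bar> \<partial>lborel)"
    and tail: "(\<integral>\<^sup>+x. ennreal \<bar>b x\<bar> * indicator {x. R < \<bar>x\<bar>} x \<partial>lborel) < ennreal (\<eta> / 3)"
  shows "ennreal (2 * \<eta>\<^sup>2 / (9 * R)) \<le> (\<integral>\<^sup>+x. ennreal ((b x)\<^sup>2) \<partial>lborel)"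
proof (rule ccontr)
  define l where "l = 3 * R / \<eta>"
  have l: "0 < l" and Rl: "R / l = \<eta> / 3" and lc: "l / 2 * (2 * \<eta>\<^sup>2 / (9 * R)) = \<eta> / 3"
    using R \<eta> by (auto simp: l_def power2_eq_square)
  let ?I = "\<integral>\<^sup>+x. ennreal ((b x)\<^sup>2) \<partial>lborel"
  let ?X = "\<integral>\<^sup>+x. ennreal \<bar>b x\<bar> * indicator {x. R < \<bar>x\<bar>} x \<partial>lborel"
  have "ennreal \<eta> \<le> (\<integral>\<^sup>+x. ennreal \<bar>b x\<bar> \<partial>lborel)" by (rule L1)
  also have "\<dots> = (\<integral>\<^sup>+x. ennreal \<bar>b x\<bar> * indicator {-R..R} x + ennreal \<bar>b x\<bar> * indicator {x. R < \<bar>x\<bar>} x \<partial>lborel)"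
    by (rule nn_integral_cong) (auto simp: indicator_def)
  also have "\<dots> = (\<integral>\<^sup>+x. ennreal \<bar>b x\<bar> * indicator {-R..R} x \<partial>lborel) + ?X"
    by (intro nn_integral_add) auto
  also have "\<dots> \<le> ennreal (l / 2) * ?I + ennreal (\<eta> / 3) + ?X"
    using nn_integral_abs_interval_le[OF l, of R b] R by (auto simp: Rl intro!: add_right_mono)
  finally have main: "ennreal \<eta> \<le> ennreal (l / 2) * ?I + ennreal (\<eta> / 3) + ?X" .
  assume "\<not> ennreal (2 * \<eta>\<^sup>2 / (9 * R)) \<le> ?I"
  then obtain i where i: "?I = ennreal i" "0 \<le> i" "i < 2 * \<eta>\<^sup>2 / (9 * R)"
    by (cases ?I) (auto simp: ennreal_less_iff)
  obtain x where x: "?X = ennreal x" "0 \<le> x" "x < \<eta> / 3"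
    using tail by (cases ?X) (auto simp: ennreal_less_iff)
  have "ennreal (l / 2) * ennreal i = ennreal (l / 2 * i)" using l i by (subst ennreal_mult) auto
  moreover have "ennreal (l / 2 * i) + ennreal (\<eta> / 3) + ennreal x = ennreal (l / 2 * i + \<eta> / 3 + x)"
    using l i x \<eta> by (simp add: ennreal_plus)
  ultimately have "ennreal \<eta> \<le> ennreal (l / 2 * i + \<eta> / 3 + x)"
    using main unfolding i(1) x(1) by simp
  then have "\<eta> \<le> l / 2 * i + \<eta> / 3 + x"
    using l \<eta> i x by (subst (asm) ennreal_le_iff) auto
  moreover have "l / 2 * i < \<eta> / 3" using i l lc by (metis mult_strict_left_mono half_gt_zero)
  ultimately show False using x by linarith
qed

lemma nn_integral_small_tail:
  fixes F :: "'a \<Rightarrow> ennreal" and \<phi> :: "'a \<Rightarrow> real"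
  assumes [measurable]: "F \<in> borel_measurable M" "\<phi> \<in> borel_measurable M"
    and fin: "(\<integral>\<^sup>+x. F x \<partial>M) < \<infinity>" and e: "0 < e"
  shows "\<exists>R>0. \<forall>R'\<ge>R. (\<integral>\<^sup>+x. F x * indicator {x. R' < \<phi> x} x \<partial>M) < e"
proof -
  let ?T = "\<lambda>k x. F x * indicator {x. real (Suc k) < \<phi> x} x"
  have dec: "decseq ?T"
    by (rule decseq_SucI) (auto intro!: mult_left_mono simp: le_fun_def indicator_def)
  have vanish: "(INF k. ?T k x) = 0" for x
  proof -
    have "(INF k. ?T k x) \<le> ?T (nat \<lceil>\<phi> x\<rceil>) x" by (rule INF_lower) simp
    also have "\<dots> = 0"
      using of_nat_ceiling[of "\<phi> x"] by (simp add: not_less)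
    finally show ?thesis by simp
  qed
  have "(INF k. \<integral>\<^sup>+x. ?T k x \<partial>M) = (\<integral>\<^sup>+x. (INF k. ?T k x) \<partial>M)"
  proof (rule nn_integral_monotone_convergence_INF_decseq[symmetric, OF dec])
    show "(\<integral>\<^sup>+x. ?T k x \<partial>M) < \<infinity>" for k
      using fin by (rule le_less_trans[rotated]) (auto intro!: nn_integral_mono simp: indicator_def)
  qed measurable
  also have "\<dots> = 0" unfolding vanish by simp
  finally have "(INF k. \<integral>\<^sup>+x. ?T k x \<partial>M) < e" using e by simp
  then obtain k where k: "(\<integral>\<^sup>+x. ?T k x \<partial>M) < e" by (auto simp: INF_less_iff)
  show ?thesis
  proof (intro exI[of _ "real (Suc k)"] conjI allI impI)
    fix R' assume "real (Suc k) \<le> R'"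
    then have "(\<integral>\<^sup>+x. F x * indicator {x. R' < \<phi> x} x \<partial>M) \<le> (\<integral>\<^sup>+x. ?T k x \<partial>M)"
      by (intro nn_integral_mono mult_left_mono) (auto simp: indicator_def)
    then show "(\<integral>\<^sup>+x. F x * indicator {x. R' < \<phi> x} x \<partial>M) < e" using k by (rule le_less_trans)
  qed simp
qed

section \<open>Characteristic functions of integrable functions\<close>

lemma cis_measurable[measurable]: "cis \<in> borel_measurable borel"
  by (intro borel_measurable_continuous_onI continuous_intros)

lemma char_fun_norm_le: "ennreal (cmod (char_fun u t)) \<le> (\<integral>\<^sup>+x. ennreal \<bar>u x\<bar> \<partial>lborel)"
proof (cases "integrable lborel (\<lambda>x. cis (t * x) * complex_of_real (u x))")
  case True
  have "ennreal (cmod (char_fun u t)) \<le> (\<integral>\<^sup>+x. ennreal (norm (cis (t * x) * complex_of_real (u x))) \<partial>lborel)"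
    unfolding char_fun_def by (rule integral_norm_bound_ennreal[OF True])
  then show ?thesis by (simp add: norm_mult)
next
  case False
  then show ?thesis by (simp add: char_fun_def not_integrable_integral_eq)
qed

lemma char_fun_rescale:
  assumes h: "0 < h"
  shows "(\<integral>x. cis (t * x) * complex_of_real (u ((x - y) / h) / h) \<partial>lborel) = cis (t * y) * char_fun u (h * t)"
proof -
  have "(\<integral>x. cis (t * x) * complex_of_real (u ((x - y) / h) / h) \<partial>lborel)
      = \<bar>h\<bar> *\<^sub>R (\<integral>v. cis (t * (y + h * v)) * complex_of_real (u ((y + h * v - y) / h) / h) \<partial>lborel)"
    by (rule lborel_integral_real_affine) (use h in auto)
  also have "\<dots> = h *\<^sub>R (\<integral>v. (cis (t * y) / complex_of_real h) * (cis (h * t * v) * complex_of_real (u v)) \<partial>lborel)"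
    using h by (auto intro!: Bochner_Integration.integral_cong simp: cis_mult[symmetric] algebra_simps)
  also have "\<dots> = cis (t * y) * char_fun u (h * t)"
    using h by (simp add: char_fun_def scaleR_conv_of_real)
  finally show ?thesis .
qed

lemma char_fun_uminus: "char_fun u (- t) = cnj (char_fun u t)"
proof -
  have "char_fun u (- t) = (\<integral>x. cnj (cis (t * x) * complex_of_real (u x)) \<partial>lborel)"
    unfolding char_fun_def by (simp add: cis_cnj)
  also have "\<dots> = cnj (char_fun u t)"
    unfolding char_fun_def by (rule Bochner_Integration.integral_cnj)
  finally show ?thesis .
qed

text \<open>Averaging the frequency over a centred Gaussian: if the characteristic function of u
  were identically 1, every Gaussian-weighted integral of u would equal 1.\<close>
lemma char_fun_one_gaussian_integral:
  assumes int: "integrable lborel u" and one: "\<And>t. char_fun u t = 1"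
  shows "(\<integral>x. u x * exp (- ((s * x)\<^sup>2) / 2) \<partial>lborel) = 1"
proof -
  let ?N = std_normal_distribution
  interpret RD: real_distribution ?N by (rule real_dist_normal_dist)
  interpret PS: pair_sigma_finite ?N lborel
    by (simp add: pair_sigma_finite_def RD.sigma_finite_measure_axioms lborel.sigma_finite_measure_axioms)
  have [measurable]: "u \<in> borel_measurable borel" using borel_measurable_integrable[OF int] by simp
  have up: "integrable (?N \<Otimes>\<^sub>M lborel) (\<lambda>p. u (snd p))"
  proof (subst integrable_iff_bounded, intro conjI)
    have "(\<integral>\<^sup>+p. ennreal (norm (u (snd p))) \<partial>(?N \<Otimes>\<^sub>M lborel)) = (\<integral>\<^sup>+t. \<integral>\<^sup>+x. ennreal (norm (u x)) \<partial>lborel \<partial>?N)"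
      by (subst lborel.nn_integral_fst[symmetric]) auto
    also have "\<dots> = (\<integral>\<^sup>+x. ennreal (norm (u x)) \<partial>lborel)" using RD.emeasure_space_1 by simp
    finally show "(\<integral>\<^sup>+p. ennreal (norm (u (snd p))) \<partial>(?N \<Otimes>\<^sub>M lborel)) < \<infinity>"
      using int by (simp add: integrable_iff_bounded)
  qed measurable
  have Fi: "integrable (?N \<Otimes>\<^sub>M lborel) (\<lambda>(t, x). cis (s * t * x) * complex_of_real (u x))"
    by (rule Bochner_Integration.integrable_bound[OF integrable_norm[OF up]]) (auto simp: case_prod_beta norm_mult)
  have gauss: "(\<integral>t. cis (s * t * x) * complex_of_real (u x) \<partial>?N) = complex_of_real (u x * exp (- ((s * x)\<^sup>2) / 2))" for x
  proof -
    have "(\<integral>t. cis (s * t * x) * complex_of_real (u x) \<partial>?N) = char ?N (s * x) * complex_of_real (u x)"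
      by (simp add: char_def cis_conv_exp mult_ac)
    then show ?thesis by (simp add: char_std_normal_distribution)
  qed
  have "complex_of_real (\<integral>x. u x * exp (- ((s * x)\<^sup>2) / 2) \<partial>lborel)
      = (\<integral>x. complex_of_real (u x * exp (- ((s * x)\<^sup>2) / 2)) \<partial>lborel)"
    by (rule integral_complex_of_real[symmetric])
  also have "\<dots> = (\<integral>x. (\<integral>t. cis (s * t * x) * complex_of_real (u x) \<partial>?N) \<partial>lborel)"
    by (simp only: gauss)
  also have "\<dots> = (\<integral>t. (\<integral>x. cis (s * t * x) * complex_of_real (u x) \<partial>lborel) \<partial>?N)"
    by (rule PS.Fubini_integral[OF Fi])
  also have "\<dots> = (\<integral>t. 1 \<partial>?N)"
    using one by (simp add: char_fun_def)
  also have "\<dots> = 1" using RD.prob_space by simp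
  finally show ?thesis by (simp add: complex_eq_iff)
qed

text \<open>The characteristic function of an integrable function is not identically 1 on
  [0, \<infinity>): the Gaussian-weighted integrals above tend to 0 by dominated convergence.\<close>
lemma char_fun_not_identically_one:
  assumes int: "integrable lborel u"
  shows "\<exists>t\<ge>0. char_fun u t \<noteq> 1"
proof (rule ccontr)
  assume none: "\<not> (\<exists>t\<ge>0. char_fun u t \<noteq> 1)"
  have one: "char_fun u t = 1" for t
    using none char_fun_uminus[of u "- t"] by (cases "0 \<le> t") auto
  have [measurable]: "u \<in> borel_measurable borel" using borel_measurable_integrable[OF int] by simp
  let ?s = "\<lambda>k x. u x * exp (- ((real (Suc k) * x)\<^sup>2) / 2)"
  have lim: "AE x in lborel. (\<lambda>k. ?s k x) \<longlonglongrightarrow> 0"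
    using AE_lborel_singleton[of 0]
  proof eventually_elim
    case (elim x)
    then have "filterlim (\<lambda>k. real (Suc k) * (x\<^sup>2 / 2)) at_top sequentially"
      by (intro filterlim_at_top_mult_tendsto_pos[OF tendsto_const] filterlim_compose[OF filterlim_real_sequentially filterlim_Suc]) simp
    then have "filterlim (\<lambda>k. (real (Suc k) * x)\<^sup>2 / 2) at_top sequentially"
    proof (rule filterlim_at_top_mono, intro always_eventually allI)
      fix k
      have "real (Suc k) * (x\<^sup>2 / 2) \<le> (real (Suc k))\<^sup>2 * (x\<^sup>2 / 2)"
        by (intro mult_right_mono) (auto simp: power2_eq_square)
      then show "real (Suc k) * (x\<^sup>2 / 2) \<le> (real (Suc k) * x)\<^sup>2 / 2"
        by (simp add: power_mult_distrib)
    qed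
    then have "filterlim (\<lambda>k. - ((real (Suc k) * x)\<^sup>2) / 2) at_bot sequentially"
      by (simp add: filterlim_uminus_at_bot)
    then show ?case by (intro tendsto_mult_right_zero filterlim_compose[OF exp_at_bot])
  qed
  have dom: "AE x in lborel. norm (?s k x) \<le> \<bar>u x\<bar>" for k
    by (rule AE_I2) (simp add: abs_mult mult_left_le)
  have "(\<lambda>k. \<integral>x. ?s k x \<partial>lborel) \<longlonglongrightarrow> (\<integral>x. 0 \<partial>lborel)"
    using Bochner_Integration.integral_dominated_convergence[OF _ _ _ lim dom] int by simp
  moreover have "(\<lambda>k. \<integral>x. ?s k x \<partial>lborel) \<longlonglongrightarrow> 1"
    using char_fun_one_gaussian_integral[OF int one] by simp
  ultimately show False using LIMSEQ_unique by fastforce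
qed

section \<open>The risk of the kernel density estimator\<close>

locale kde_setting =
  fixes K f :: "real \<Rightarrow> real"
  assumes kernel: "is_kernel K" and K_sq_int: "integrable lborel (\<lambda>x. (K x)\<^sup>2)"
    and density: "is_density f" and f_sq_int: "integrable lborel (\<lambda>x. (f x)\<^sup>2)"
begin

definition M where "M = density lborel (\<lambda>x. ennreal (f x))"
definition B where "B = (SOME B. \<forall>x. \<bar>K x\<bar> \<le> B)"
abbreviation Kh :: "real \<Rightarrow> real \<Rightarrow> real" where "Kh h u \<equiv> K (u / h) / h"
definition nK1 where "nK1 = (\<integral>x. \<bar>K x\<bar> \<partial>lborel)"
definition nK2 where "nK2 = (\<integral>x. (K x)\<^sup>2 \<partial>lborel)"
definition nf2 where "nf2 = (\<integral>x. (f x)\<^sup>2 \<partial>lborel)"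

lemma K_int: "integrable lborel K" using kernel by (simp add: is_kernel_def)
lemma K_one: "(\<integral>x. K x \<partial>lborel) = 1" using kernel by (simp add: is_kernel_def)
lemma K_meas[measurable]: "K \<in> borel_measurable borel"
  using borel_measurable_integrable[OF K_int] by simp
lemma f_meas[measurable]: "f \<in> borel_measurable borel" using density by (simp add: is_density_def)
lemma f_nonneg: "0 \<le> f x" using density by (simp add: is_density_def)
lemma f_int: "integrable lborel f" using density by (simp add: is_density_def)
lemma f_one: "(\<integral>x. f x \<partial>lborel) = 1" using density by (simp add: is_density_def)

lemma K_bound: "\<bar>K x\<bar> \<le> B"
proof -
  have "\<exists>B. \<forall>x. \<bar>K x\<bar> \<le> B" using kernel by (simp add: is_kernel_def)
  then have "\<forall>x. \<bar>K x\<bar> \<le> (SOME B. \<forall>x. \<bar>K x\<bar> \<le> B)" by (rule someI_ex)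
  then show ?thesis unfolding B_def by blast
qed

lemma Kh_bound: "0 < h \<Longrightarrow> \<bar>Kh h u\<bar> \<le> B / h"
  using K_bound[of "u / h"] by (simp add: divide_right_mono)

lemma sets_M[measurable_cong]: "sets M = sets borel" by (simp add: M_def)
lemma space_M[simp]: "space M = UNIV" by (simp add: M_def)

lemma nn_integral_f: "(\<integral>\<^sup>+x. ennreal (f x) \<partial>lborel) = 1"
  using nn_integral_eq_integral[OF f_int] f_nonneg f_one by simp

lemma prob_M: "prob_space M"
  by (rule prob_spaceI) (simp add: M_def emeasure_density nn_integral_f)

sublocale PM: prob_space M by (rule prob_M)

lemma measure_M_UNIV: "measure M UNIV = 1" using PM.prob_space by simp

lemma sample_eq: "sample n f = PiM {..<n} (\<lambda>_. M)"
  by (simp add: sample_def M_def)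

lemma integral_M: "g \<in> borel_measurable borel \<Longrightarrow> (\<integral>y. g y \<partial>M) = (\<integral>y. f y * g y \<partial>lborel)"
  for g :: "real \<Rightarrow> real"
  unfolding M_def by (subst integral_density) (auto simp: f_nonneg)

lemma nK2_pos: "0 < nK2"
  unfolding nK2_def by (rule square_integral_pos[OF K_sq_int]) (simp add: K_one)

lemma nf2_pos: "0 < nf2"
  unfolding nf2_def by (rule square_integral_pos[OF f_sq_int]) (simp add: f_one)

lemma nn_integral_K_abs: "(\<integral>\<^sup>+x. ennreal \<bar>K x\<bar> \<partial>lborel) = ennreal nK1"
  unfolding nK1_def by (rule nn_integral_eq_integral) (auto intro: K_int)

lemma nn_integral_K_sq: "(\<integral>\<^sup>+x. ennreal ((K x)\<^sup>2) \<partial>lborel) = ennreal nK2"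
  unfolding nK2_def by (rule nn_integral_eq_integral[OF K_sq_int]) simp

lemma nn_integral_f_sq: "(\<integral>\<^sup>+x. ennreal ((f x)\<^sup>2) \<partial>lborel) = ennreal nf2"
  unfolding nf2_def by (rule nn_integral_eq_integral[OF f_sq_int]) simp

lemma nn_integral_Kh_abs:
  assumes h: "0 < h"
  shows "(\<integral>\<^sup>+x. ennreal \<bar>Kh h (x - y)\<bar> \<partial>lborel) = ennreal nK1"
proof -
  have "(\<integral>\<^sup>+x. ennreal \<bar>Kh h (x - y)\<bar> \<partial>lborel) = (\<integral>\<^sup>+x. ennreal (1 / h) * ennreal \<bar>K ((x - y) / h)\<bar> \<partial>lborel)"
    using h by (intro nn_integral_cong) (simp add: ennreal_mult[symmetric] abs_divide)
  also have "\<dots> = ennreal (1 / h) * (\<integral>\<^sup>+x. ennreal \<bar>K ((x - y) / h)\<bar> \<partial>lborel)"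
    by (rule nn_integral_cmult) measurable
  also have "(\<integral>\<^sup>+x. ennreal \<bar>K ((x - y) / h)\<bar> \<partial>lborel) = ennreal h * ennreal nK1"
    using nn_integral_rescale[of "\<lambda>u. ennreal \<bar>K u\<bar>" h y] h by (simp add: nn_integral_K_abs)
  also have "ennreal (1 / h) * (ennreal h * ennreal nK1) = ennreal nK1"
    using h by (simp add: ennreal_mult[symmetric] mult.assoc[symmetric] nK1_def del: ennreal_mult')
  finally show ?thesis .
qed

lemma nn_integral_Kh_sq:
  assumes h: "0 < h"
  shows "(\<integral>\<^sup>+x. ennreal ((Kh h (x - y))\<^sup>2) \<partial>lborel) = ennreal (nK2 / h)"
proof -
  have "(\<integral>\<^sup>+x. ennreal ((Kh h (x - y))\<^sup>2) \<partial>lborel) = (\<integral>\<^sup>+x. ennreal (1 / h\<^sup>2) * ennreal ((K ((x - y) / h))\<^sup>2) \<partial>lborel)"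
    using h by (intro nn_integral_cong) (simp add: ennreal_mult[symmetric] power_divide)
  also have "\<dots> = ennreal (1 / h\<^sup>2) * (\<integral>\<^sup>+x. ennreal ((K ((x - y) / h))\<^sup>2) \<partial>lborel)"
    by (rule nn_integral_cmult) measurable
  also have "(\<integral>\<^sup>+x. ennreal ((K ((x - y) / h))\<^sup>2) \<partial>lborel) = ennreal h * ennreal nK2"
    using nn_integral_rescale[of "\<lambda>u. ennreal ((K u)\<^sup>2)" h y] h by (simp add: nn_integral_K_sq)
  also have "ennreal (1 / h\<^sup>2) * (ennreal h * ennreal nK2) = ennreal (nK2 / h)"
    using h nK2_pos by (simp add: ennreal_mult[symmetric] power2_eq_square del: ennreal_mult')
  finally show ?thesis .
qed

lemma nn_integral_Kh_sq_M:
  assumes h: "0 < h"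
  shows "(\<integral>\<^sup>+x. \<integral>\<^sup>+y. ennreal ((Kh h (x - y))\<^sup>2) \<partial>M \<partial>lborel) = ennreal (nK2 / h)"
proof -
  have "(\<integral>\<^sup>+x. \<integral>\<^sup>+y. ennreal ((Kh h (x - y))\<^sup>2) \<partial>M \<partial>lborel)
      = (\<integral>\<^sup>+y. \<integral>\<^sup>+x. ennreal ((Kh h (x - y))\<^sup>2) \<partial>lborel \<partial>M)"
    by (rule nn_integral_swap) (auto simp: PM.sigma_finite_measure_axioms lborel.sigma_finite_measure_axioms)
  also have "\<dots> = ennreal (nK2 / h)"
    using PM.emeasure_space_1 by (simp add: nn_integral_Kh_sq h)
  finally show ?thesis .
qed

lemma Kh_int_M: assumes h: "0 < h" shows "integrable M (\<lambda>y. Kh h (x - y))"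
proof (rule PM.integrable_const_bound[where B="B/h"])
  show "AE y in M. norm (Kh h (x - y)) \<le> B / h" using Kh_bound[OF h] by simp
qed simp

lemma Kh_sq_int_M: assumes h: "0 < h" shows "integrable M (\<lambda>y. (Kh h (x - y))\<^sup>2)"
proof (rule PM.integrable_const_bound[where B="(B/h)\<^sup>2"])
  have "\<bar>Kh h (x - y)\<bar>\<^sup>2 \<le> (B / h)\<^sup>2" for y by (rule power_mono[OF Kh_bound[OF h] abs_ge_zero])
  then show "AE y in M. norm ((Kh h (x - y))\<^sup>2) \<le> (B / h)\<^sup>2"
    by (simp only: real_norm_def abs_power2 power2_abs AE_I2)
qed simp

end

context kde_setting
begin

text \<open>One centred summand of the estimator at x, as a function of the observation y; its
  mean is the bias at x, and risk n h x is the pointwise integrand of n * MISE.\<close>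
definition dev where "dev h x y = Kh h (x - y) - f x"
definition bias where "bias h x = (\<integral>y. dev h x y \<partial>M)"
definition risk where "risk n h x = (\<integral>y. (dev h x y)\<^sup>2 \<partial>M) + (real n - 1) * (bias h x)\<^sup>2"

lemma dev_meas[measurable]: "(\<lambda>p. dev h (fst p) (snd p)) \<in> borel_measurable (borel \<Otimes>\<^sub>M borel)"
  unfolding dev_def by measurable

lemma dev_meas'[measurable]: "dev h x \<in> borel_measurable borel"
  unfolding dev_def by measurable

lemma dev_bound: "0 < h \<Longrightarrow> \<bar>dev h x y\<bar> \<le> B / h + f x"
  using Kh_bound[of h "x - y"] f_nonneg[of x] unfolding dev_def by linarith

lemma dev_int: "0 < h \<Longrightarrow> integrable M (dev h x)"
  unfolding dev_def using Kh_int_M by simp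

lemma dev_sq_int: assumes h: "0 < h" shows "integrable M (\<lambda>y. (dev h x y)\<^sup>2)"
proof (rule PM.integrable_const_bound[where B="(B/h + f x)\<^sup>2"])
  have "\<bar>dev h x y\<bar>\<^sup>2 \<le> (B/h + f x)\<^sup>2" for y by (rule power_mono[OF dev_bound[OF h] abs_ge_zero])
  then show "AE y in M. norm ((dev h x y)\<^sup>2) \<le> (B/h + f x)\<^sup>2"
    by (simp only: real_norm_def abs_power2 power2_abs AE_I2)
qed simp

lemma bias_eq: "0 < h \<Longrightarrow> bias h x = (\<integral>y. Kh h (x - y) \<partial>M) - f x"
  unfolding bias_def dev_def using Kh_int_M by (simp add: measure_M_UNIV)

lemma risk_nonneg: "0 < n \<Longrightarrow> 0 \<le> risk n h x"
  unfolding risk_def by (intro add_nonneg_nonneg mult_nonneg_nonneg) auto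

lemma bias_sq_le: "0 < h \<Longrightarrow> (bias h x)\<^sup>2 \<le> (\<integral>y. (dev h x y)\<^sup>2 \<partial>M)"
  unfolding bias_def by (rule PM.square_expectation_le[OF dev_int dev_sq_int])

lemma pointwise_risk:
  assumes n: "0 < n" and h: "0 < h"
  shows "(\<integral>\<^sup>+X. ennreal ((kde n K h X x - f x)\<^sup>2) \<partial>PiM {..<n} (\<lambda>_. M)) = ennreal (risk n h x / real n)"
proof -
  let ?S = "PiM {..<n} (\<lambda>_. M)" and ?avg = "\<lambda>X. (\<Sum>i<n. dev h x (X i)) / real n"
  interpret S: prob_space ?S by (intro prob_space_PiM) (simp add: prob_M)
  have eq: "kde n K h X x - f x = ?avg X" for X
    using n by (simp add: kde_def dev_def sum_subtractf sum_divide_distrib[symmetric] field_simps)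
  have avg_bound: "\<bar>?avg X\<bar> \<le> B / h + f x" for X
  proof -
    have "\<bar>\<Sum>i<n. dev h x (X i)\<bar> \<le> (\<Sum>i<n. \<bar>dev h x (X i)\<bar>)" by (rule sum_abs)
    also have "\<dots> \<le> (\<Sum>i<n. B / h + f x)" by (intro sum_mono dev_bound h)
    finally show ?thesis using n by (simp add: abs_divide divide_le_eq mult.commute)
  qed
  have int: "integrable ?S (\<lambda>X. (?avg X)\<^sup>2)"
  proof (rule S.integrable_const_bound[where B="(B / h + f x)\<^sup>2"])
    have "\<bar>?avg X\<bar>\<^sup>2 \<le> (B / h + f x)\<^sup>2" for X by (rule power_mono[OF avg_bound abs_ge_zero])
    then show "AE X in ?S. norm ((?avg X)\<^sup>2) \<le> (B / h + f x)\<^sup>2"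
      by (simp only: real_norm_def abs_power2 power2_abs AE_I2)
  qed measurable
  have dev_meas_M: "dev h x \<in> borel_measurable M" by measurable
  have "(\<integral>\<^sup>+X. ennreal ((kde n K h X x - f x)\<^sup>2) \<partial>?S) = ennreal (\<integral>X. (?avg X)\<^sup>2 \<partial>?S)"
    using nn_integral_eq_integral[OF int] by (simp add: eq)
  also have "(\<integral>X. (?avg X)\<^sup>2 \<partial>?S) = (\<integral>X. (\<Sum>i<n. dev h x (X i))\<^sup>2 \<partial>?S) / (real n)\<^sup>2"
    by (simp add: power_divide)
  also have "\<dots> = risk n h x / real n"
    using integral_iid_sum_square[OF prob_M dev_meas_M, of "B / h + f x" n] dev_bound[OF h, of x] n
    by (simp add: risk_def bias_def power2_eq_square field_simps)
  finally show ?thesis .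
qed

lemma scaled_MISE_eq:
  assumes n: "0 < n" and h: "0 < h"
  shows "of_nat n * MISE n f K h = (\<integral>\<^sup>+x. ennreal (risk n h x) \<partial>lborel)"
proof -
  let ?S = "PiM {..<n} (\<lambda>_. M)"
  interpret S: prob_space ?S by (intro prob_space_PiM) (simp add: prob_M)
  have "MISE n f K h = (\<integral>\<^sup>+x. \<integral>\<^sup>+X. ennreal ((kde n K h X x - f x)\<^sup>2) \<partial>?S \<partial>lborel)"
    unfolding MISE_def sample_eq
    by (rule nn_integral_swap)
       (auto simp: S.sigma_finite_measure_axioms lborel.sigma_finite_measure_axioms kde_def)
  also have "\<dots> = (\<integral>\<^sup>+x. ennreal (risk n h x / real n) \<partial>lborel)"
    by (simp add: pointwise_risk n h)
  finally have "of_nat n * MISE n f K h = (\<integral>\<^sup>+x. of_nat n * ennreal (risk n h x / real n) \<partial>lborel)"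
    by (simp add: nn_integral_cmult risk_def bias_def)
  also have "\<dots> = (\<integral>\<^sup>+x. ennreal (risk n h x) \<partial>lborel)"
    using n risk_nonneg[OF n]
    by (intro nn_integral_cong) (simp add: ennreal_of_nat_eq_real_of_nat ennreal_mult[symmetric] del: ennreal_mult')
  finally show ?thesis .
qed

lemma scaled_MISE_ge_variance:
  assumes n: "0 < n" and h: "0 < h"
  shows "ennreal (nK2 / (2 * h)) \<le> of_nat n * MISE n f K h + ennreal nf2"
proof -
  have pointwise: "(\<integral>\<^sup>+y. ennreal ((Kh h (x - y))\<^sup>2) \<partial>M) / 2 \<le> ennreal (risk n h x) + ennreal ((f x)\<^sup>2)" for x
  proof -
    have "(\<integral>y. (Kh h (x - y))\<^sup>2 / 2 \<partial>M) \<le> (\<integral>y. (dev h x y)\<^sup>2 + (f x)\<^sup>2 \<partial>M)"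
    proof (rule integral_mono)
      show "(Kh h (x - y))\<^sup>2 / 2 \<le> (dev h x y)\<^sup>2 + (f x)\<^sup>2" for y
        unfolding dev_def by (rule half_square_le)
    qed (use Kh_sq_int_M[OF h] dev_sq_int[OF h] in auto)
    also have "\<dots> = (\<integral>y. (dev h x y)\<^sup>2 \<partial>M) + (f x)\<^sup>2"
      using dev_sq_int[OF h] by (simp add: measure_M_UNIV)
    also have "\<dots> \<le> risk n h x + (f x)\<^sup>2"
      using n by (simp add: risk_def)
    finally have "(\<integral>y. (Kh h (x - y))\<^sup>2 \<partial>M) / 2 \<le> risk n h x + (f x)\<^sup>2" by simp
    moreover have "(\<integral>\<^sup>+y. ennreal ((Kh h (x - y))\<^sup>2) \<partial>M) = ennreal (\<integral>y. (Kh h (x - y))\<^sup>2 \<partial>M)"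
      by (rule nn_integral_eq_integral[OF Kh_sq_int_M[OF h]]) simp
    ultimately show ?thesis
      using risk_nonneg[OF n, of h x] by (simp add: ennreal_half ennreal_plus[symmetric] ennreal_leI del: ennreal_plus)
  qed
  have "ennreal (nK2 / (2 * h)) = (\<integral>\<^sup>+x. \<integral>\<^sup>+y. ennreal ((Kh h (x - y))\<^sup>2) \<partial>M \<partial>lborel) / 2"
    using nK2_pos h by (simp add: nn_integral_Kh_sq_M ennreal_half)
  also have "\<dots> = (\<integral>\<^sup>+x. (\<integral>\<^sup>+y. ennreal ((Kh h (x - y))\<^sup>2) \<partial>M) / 2 \<partial>lborel)"
    by (simp add: nn_integral_divide)
  also have "\<dots> \<le> (\<integral>\<^sup>+x. ennreal (risk n h x) + ennreal ((f x)\<^sup>2) \<partial>lborel)"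
    by (rule nn_integral_mono) (rule pointwise)
  also have "\<dots> = of_nat n * MISE n f K h + ennreal nf2"
    by (simp add: nn_integral_add risk_def bias_def scaled_MISE_eq[OF n h] nn_integral_f_sq)
  finally show ?thesis .
qed

lemma scaled_MISE_ge_bias:
  assumes n: "0 < n" and h: "0 < h"
  shows "of_nat n * (\<integral>\<^sup>+x. ennreal ((bias h x)\<^sup>2) \<partial>lborel) \<le> of_nat n * MISE n f K h"
proof -
  have "real n * (bias h x)\<^sup>2 \<le> risk n h x" for x
    using bias_sq_le[OF h, of x] by (simp add: risk_def algebra_simps)
  then have "of_nat n * ennreal ((bias h x)\<^sup>2) \<le> ennreal (risk n h x)" for x
    by (simp add: ennreal_of_nat_eq_real_of_nat ennreal_mult[symmetric] ennreal_leI del: ennreal_mult')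
  then have "(\<integral>\<^sup>+x. of_nat n * ennreal ((bias h x)\<^sup>2) \<partial>lborel) \<le> (\<integral>\<^sup>+x. ennreal (risk n h x) \<partial>lborel)"
    by (intro nn_integral_mono)
  then show ?thesis
    by (simp add: nn_integral_cmult bias_def scaled_MISE_eq[OF n h])
qed

text \<open>For large bandwidth the bias is close to -f: its L2 norm is at least that of f
  minus the L2 mass nK2/h of the flattened kernel.\<close>
lemma bias_sq_ge_large_bandwidth:
  assumes h: "0 < h"
  shows "ennreal (nf2 / 2) \<le> (\<integral>\<^sup>+x. ennreal ((bias h x)\<^sup>2) \<partial>lborel) + ennreal (nK2 / h)"
proof -
  have pointwise: "ennreal ((f x)\<^sup>2 / 2) \<le> ennreal ((bias h x)\<^sup>2) + (\<integral>\<^sup>+y. ennreal ((Kh h (x - y))\<^sup>2) \<partial>M)" for x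
  proof -
    let ?c = "\<integral>y. Kh h (x - y) \<partial>M"
    have "?c\<^sup>2 \<le> (\<integral>y. (Kh h (x - y))\<^sup>2 \<partial>M)"
      by (rule PM.square_expectation_le[OF Kh_int_M[OF h] Kh_sq_int_M[OF h]])
    moreover have "(f x)\<^sup>2 / 2 \<le> (bias h x)\<^sup>2 + ?c\<^sup>2"
      unfolding bias_eq[OF h] using half_square_le[of "f x" ?c] by (simp add: power2_commute)
    moreover have "(\<integral>\<^sup>+y. ennreal ((Kh h (x - y))\<^sup>2) \<partial>M) = ennreal (\<integral>y. (Kh h (x - y))\<^sup>2 \<partial>M)"
      by (rule nn_integral_eq_integral[OF Kh_sq_int_M[OF h]]) simp
    ultimately show ?thesis
      by (simp add: ennreal_plus[symmetric] ennreal_leI del: ennreal_plus)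
  qed
  have "ennreal (nf2 / 2) = (\<integral>\<^sup>+x. ennreal ((f x)\<^sup>2 / 2) \<partial>lborel)"
    using nf2_pos by (simp add: ennreal_half[symmetric] nn_integral_divide nn_integral_f_sq)
  also have "\<dots> \<le> (\<integral>\<^sup>+x. ennreal ((bias h x)\<^sup>2) + (\<integral>\<^sup>+y. ennreal ((Kh h (x - y))\<^sup>2) \<partial>M) \<partial>lborel)"
    by (rule nn_integral_mono) (rule pointwise)
  also have "\<dots> = (\<integral>\<^sup>+x. ennreal ((bias h x)\<^sup>2) \<partial>lborel) + ennreal (nK2 / h)"
    by (simp add: nn_integral_add bias_def nn_integral_Kh_sq_M[OF h])
  finally show ?thesis .
qed

end

section \<open>The bias in Fourier space and its tails\<close>

context kde_setting
begin

definition smooth where "smooth h x = (\<integral>y. f y * Kh h (x - y) \<partial>lborel)"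

lemma bias_smooth: "0 < h \<Longrightarrow> bias h x = smooth h x - f x"
  by (simp add: bias_eq integral_M smooth_def)

lemma convolution_int:
  assumes h: "0 < h"
  shows "integrable (lborel \<Otimes>\<^sub>M lborel) (\<lambda>(x, y). f y * Kh h (x - y))"
proof (subst integrable_iff_bounded, intro conjI)
  have inner: "(\<integral>\<^sup>+x. ennreal (norm (f y * Kh h (x - y))) \<partial>lborel) = ennreal (f y) * ennreal nK1" for y
  proof -
    have "(\<integral>\<^sup>+x. ennreal (norm (f y * Kh h (x - y))) \<partial>lborel) = (\<integral>\<^sup>+x. ennreal (f y) * ennreal \<bar>Kh h (x - y)\<bar> \<partial>lborel)"
      using f_nonneg[of y] by (intro nn_integral_cong) (simp add: abs_mult ennreal_mult[symmetric] del: ennreal_mult')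
    also have "\<dots> = ennreal (f y) * (\<integral>\<^sup>+x. ennreal \<bar>Kh h (x - y)\<bar> \<partial>lborel)"
      by (rule nn_integral_cmult) measurable
    also have "\<dots> = ennreal (f y) * ennreal nK1"
      by (simp only: nn_integral_Kh_abs[OF h])
    finally show ?thesis .
  qed
  have "(\<integral>\<^sup>+p. ennreal (norm ((\<lambda>(x, y). f y * Kh h (x - y)) p)) \<partial>(lborel \<Otimes>\<^sub>M lborel))
      = (\<integral>\<^sup>+y. \<integral>\<^sup>+x. ennreal (norm (f y * Kh h (x - y))) \<partial>lborel \<partial>lborel)"
    by (subst lborel_pair.nn_integral_snd[symmetric]) (auto simp: case_prod_beta)
  also have "\<dots> = ennreal nK1"
    by (simp only: inner) (simp add: nn_integral_multc nn_integral_f)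
  finally show "(\<integral>\<^sup>+p. ennreal (norm ((\<lambda>(x, y). f y * Kh h (x - y)) p)) \<partial>(lborel \<Otimes>\<^sub>M lborel)) < \<infinity>"
    by simp
qed measurable

lemma smooth_int: "0 < h \<Longrightarrow> integrable lborel (smooth h)"
  unfolding smooth_def using lborel_pair.integrable_fst[OF convolution_int] by simp

lemma smooth_meas[measurable]: "0 < h \<Longrightarrow> smooth h \<in> borel_measurable borel"
  using borel_measurable_integrable[OF smooth_int] by simp

lemma bias_int: assumes h: "0 < h" shows "integrable lborel (bias h)"
proof -
  have "bias h = (\<lambda>x. smooth h x - f x)" using bias_smooth[OF h] by auto
  then show ?thesis using smooth_int[OF h] f_int by simp
qed

lemma bias_meas[measurable]: "0 < h \<Longrightarrow> bias h \<in> borel_measurable borel"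
  using borel_measurable_integrable[OF bias_int] by simp

lemma char_fun_bias:
  assumes h: "0 < h"
  shows "char_fun (bias h) t = char_fun f t * (char_fun K (h * t) - 1)"
proof -
  have f_cint: "integrable lborel (\<lambda>x. cis (t * x) * complex_of_real (f x))"
    by (rule Bochner_Integration.integrable_bound[OF integrable_norm[OF f_int]]) (auto simp: norm_mult)
  have [measurable]: "smooth h \<in> borel_measurable borel" by (rule smooth_meas[OF h])
  have smooth_cint: "integrable lborel (\<lambda>x. cis (t * x) * complex_of_real (smooth h x))"
    by (rule Bochner_Integration.integrable_bound[OF integrable_norm[OF smooth_int[OF h]]])
       (auto simp: norm_mult intro!: AE_I2)
  have pair_cint: "integrable (lborel \<Otimes>\<^sub>M lborel) (\<lambda>(x, y). cis (t * x) * complex_of_real (f y * Kh h (x - y)))"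
    by (rule Bochner_Integration.integrable_bound[OF integrable_norm[OF convolution_int[OF h]]])
       (auto simp: case_prod_beta norm_mult norm_divide abs_mult intro!: AE_I2)
  have "(\<integral>x. cis (t * x) * complex_of_real (smooth h x) \<partial>lborel)
      = (\<integral>x. \<integral>y. cis (t * x) * complex_of_real (f y * Kh h (x - y)) \<partial>lborel \<partial>lborel)"
    unfolding smooth_def by (simp add: integral_complex_of_real[symmetric])
  also have "\<dots> = (\<integral>y. \<integral>x. cis (t * x) * complex_of_real (f y * Kh h (x - y)) \<partial>lborel \<partial>lborel)"
    by (rule lborel_pair.Fubini_integral[symmetric, OF pair_cint])
  also have "\<dots> = (\<integral>y. (cis (t * y) * complex_of_real (f y)) * char_fun K (h * t) \<partial>lborel)"
  proof (rule Bochner_Integration.integral_cong[OF refl])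
    fix y
    have "(\<integral>x. cis (t * x) * complex_of_real (f y * Kh h (x - y)) \<partial>lborel)
        = complex_of_real (f y) * (\<integral>x. cis (t * x) * complex_of_real (Kh h (x - y)) \<partial>lborel)"
      by (simp add: mult.left_commute)
    also have "\<dots> = complex_of_real (f y) * (cis (t * y) * char_fun K (h * t))"
      by (simp only: char_fun_rescale[OF h])
    finally show "(\<integral>x. cis (t * x) * complex_of_real (f y * Kh h (x - y)) \<partial>lborel)
        = (cis (t * y) * complex_of_real (f y)) * char_fun K (h * t)"
      by (simp add: mult_ac)
  qed
  also have "\<dots> = char_fun f t * char_fun K (h * t)"
    by (simp add: char_fun_def)
  finally show ?thesis
    unfolding char_fun_def using f_cint smooth_cint by (simp add: bias_smooth[OF h] algebra_simps)
qed

lemma char_fun_f_eq_char: "char_fun f t = char M t"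
proof -
  have "char M t = (\<integral>x. f x *\<^sub>R iexp (t * x) \<partial>lborel)"
    unfolding char_def M_def by (subst integral_density) (auto simp: f_nonneg)
  then show ?thesis
    unfolding char_fun_def by (simp add: scaleR_conv_of_real cis_conv_exp mult.commute)
qed

text \<open>By continuity of the characteristic function of the law of one observation,
  |\<phi>_f| \<ge> 1/2 near the origin.\<close>
lemma char_fun_f_near_zero: "\<exists>r>0. \<forall>u. \<bar>u\<bar> \<le> r \<longrightarrow> 1 / 2 \<le> cmod (char_fun f u)"
proof -
  interpret RD: real_distribution M
    by (simp add: real_distribution_def real_distribution_axioms_def prob_M sets_M)
  have "isCont (char M) 0" by (rule RD.isCont_char)
  then obtain d where d: "0 < d" "\<And>x. dist x 0 < d \<Longrightarrow> dist (char M x) (char M 0) < 1 / 2"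
    unfolding continuous_at_eps_delta by (metis zero_less_divide_1_iff zero_less_numeral)
  have "1 / 2 \<le> cmod (char_fun f u)" if "\<bar>u\<bar> \<le> d / 2" for u
  proof -
    have "cmod (char M u - 1) < 1 / 2" using d(2)[of u] that d(1) RD.char_zero by (simp add: dist_norm)
    moreover have "1 \<le> cmod (char M u) + cmod (char M u - 1)"
      using norm_triangle_ineq4[of "char M u" "char M u - 1"] by simp
    ultimately show ?thesis by (simp add: char_fun_f_eq_char)
  qed
  then show ?thesis using d(1) by (intro exI[of _ "d/2"]) auto
qed

text \<open>Tails, uniform in the bandwidth h \<le> H, that control the mass of the bias outside [-R, R].\<close>
definition tail_f where "tail_f R = (\<integral>\<^sup>+x. ennreal (f x) * indicator {x. R < \<bar>x\<bar>} x \<partial>lborel)"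
definition tail_K where
  "tail_K H R = (\<integral>\<^sup>+p. ennreal (f (fst p) * \<bar>K (snd p)\<bar>) * indicator {p. R < \<bar>fst p\<bar> + H * \<bar>snd p\<bar>} p
     \<partial>(lborel \<Otimes>\<^sub>M lborel))"

lemma bias_abs_le:
  assumes h: "0 < h"
  shows "ennreal \<bar>bias h x\<bar> \<le> (\<integral>\<^sup>+y. ennreal (f y * \<bar>Kh h (x - y)\<bar>) \<partial>lborel) + ennreal (f x)"
proof -
  have "ennreal \<bar>smooth h x\<bar> \<le> (\<integral>\<^sup>+y. ennreal (norm (f y * Kh h (x - y))) \<partial>lborel)"
  proof (cases "integrable lborel (\<lambda>y. f y * Kh h (x - y))")
    case True
    then show ?thesis unfolding smooth_def using integral_norm_bound_ennreal[OF True] by simp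
  next
    case False
    then show ?thesis by (simp only: smooth_def not_integrable_integral_eq[OF False]) simp
  qed
  then have "ennreal \<bar>smooth h x\<bar> \<le> (\<integral>\<^sup>+y. ennreal (f y * \<bar>Kh h (x - y)\<bar>) \<partial>lborel)"
    using f_nonneg by (simp add: abs_mult)
  moreover have "ennreal \<bar>bias h x\<bar> \<le> ennreal \<bar>smooth h x\<bar> + ennreal (f x)"
    using f_nonneg[of x] by (simp add: bias_smooth[OF h] ennreal_plus[symmetric] ennreal_leI del: ennreal_plus)
  ultimately show ?thesis by (meson add_right_mono order_trans)
qed

text \<open>Changing variables x = y + h u: the kernel mass around y that lies beyond R.\<close>
lemma kernel_tail_rescale:
  assumes h: "0 < h" "h \<le> H"
  shows "(\<integral>\<^sup>+x. ennreal (f y * \<bar>Kh h (x - y)\<bar>) * indicator {x. R < \<bar>x\<bar>} x \<partial>lborel)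
       \<le> (\<integral>\<^sup>+u. ennreal (f y * \<bar>K u\<bar>) * indicator {u. R < \<bar>y\<bar> + H * \<bar>u\<bar>} u \<partial>lborel)"
proof -
  have "(\<integral>\<^sup>+x. ennreal (f y * \<bar>Kh h (x - y)\<bar>) * indicator {x. R < \<bar>x\<bar>} x \<partial>lborel)
      = ennreal h * (\<integral>\<^sup>+u. ennreal (f y * \<bar>K u\<bar> / h) * indicator {x. R < \<bar>x\<bar>} (y + h * u) \<partial>lborel)"
    using nn_integral_real_affine[of "\<lambda>x. ennreal (f y * \<bar>Kh h (x - y)\<bar>) * indicator {x. R < \<bar>x\<bar>} x" h y] h
    by (simp add: abs_divide)
  also have "\<dots> = (\<integral>\<^sup>+u. ennreal (f y * \<bar>K u\<bar>) * indicator {x. R < \<bar>x\<bar>} (y + h * u) \<partial>lborel)"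
    using h f_nonneg[of y]
    by (simp add: nn_integral_cmult[symmetric] mult.assoc[symmetric] ennreal_mult[symmetric] del: ennreal_mult')
  also have "\<dots> \<le> (\<integral>\<^sup>+u. ennreal (f y * \<bar>K u\<bar>) * indicator {u. R < \<bar>y\<bar> + H * \<bar>u\<bar>} u \<partial>lborel)"
  proof (intro nn_integral_mono mult_left_mono)
    fix u
    have "\<bar>y + h * u\<bar> \<le> \<bar>y\<bar> + H * \<bar>u\<bar>"
      using h abs_triangle_ineq[of y "h * u"] mult_right_mono[OF h(2) abs_ge_zero[of u]]
      by (simp add: abs_mult)
    then show "indicator {x. R < \<bar>x\<bar>} (y + h * u) \<le> (indicator {u. R < \<bar>y\<bar> + H * \<bar>u\<bar>} u :: ennreal)"
      by (auto simp: indicator_def)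
  qed simp
  finally show ?thesis .
qed

lemma bias_tail_le:
  assumes h: "0 < h" "h \<le> H"
  shows "(\<integral>\<^sup>+x. ennreal \<bar>bias h x\<bar> * indicator {x. R < \<bar>x\<bar>} x \<partial>lborel) \<le> tail_K H R + tail_f R"
proof -
  let ?T = "\<lambda>x. indicator {x. R < \<bar>x\<bar>} x :: ennreal"
  have "(\<integral>\<^sup>+x. ennreal \<bar>bias h x\<bar> * ?T x \<partial>lborel)
      \<le> (\<integral>\<^sup>+x. (\<integral>\<^sup>+y. ennreal (f y * \<bar>Kh h (x - y)\<bar>) * ?T x \<partial>lborel) + ennreal (f x) * ?T x \<partial>lborel)"
    using bias_abs_le[OF h(1)]
    by (intro nn_integral_mono) (auto simp: nn_integral_multc[symmetric] split: split_indicator)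
  also have "\<dots> = (\<integral>\<^sup>+y. \<integral>\<^sup>+x. ennreal (f y * \<bar>Kh h (x - y)\<bar>) * ?T x \<partial>lborel \<partial>lborel) + tail_f R"
    unfolding tail_f_def by (subst lborel_pair.Fubini') (auto intro: nn_integral_add)
  also have "\<dots> \<le> (\<integral>\<^sup>+y. \<integral>\<^sup>+u. ennreal (f y * \<bar>K u\<bar>) * indicator {u. R < \<bar>y\<bar> + H * \<bar>u\<bar>} u \<partial>lborel \<partial>lborel) + tail_f R"
    by (intro add_right_mono nn_integral_mono kernel_tail_rescale h)
  also have "(\<integral>\<^sup>+y. \<integral>\<^sup>+u. ennreal (f y * \<bar>K u\<bar>) * indicator {u. R < \<bar>y\<bar> + H * \<bar>u\<bar>} u \<partial>lborel \<partial>lborel) = tail_K H R"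
    unfolding tail_K_def by (subst lborel.nn_integral_fst[symmetric]) (auto simp: indicator_def)
  finally show ?thesis .
qed

lemma uniform_tail_small:
  assumes e: "0 < e"
  shows "\<exists>R>0. tail_K H R + tail_f R < ennreal e"
proof -
  have fin_f: "(\<integral>\<^sup>+x. ennreal (f x) \<partial>lborel) < \<infinity>" by (simp add: nn_integral_f)
  have "(\<integral>\<^sup>+p. ennreal (f (fst p) * \<bar>K (snd p)\<bar>) \<partial>(lborel \<Otimes>\<^sub>M lborel))
      = (\<integral>\<^sup>+y. \<integral>\<^sup>+u. ennreal (f y) * ennreal \<bar>K u\<bar> \<partial>lborel \<partial>lborel)"
    using f_nonneg by (subst lborel.nn_integral_fst[symmetric]) (auto simp: ennreal_mult)
  also have "\<dots> = ennreal nK1"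
    by (simp add: nn_integral_cmult nn_integral_K_abs nn_integral_multc nn_integral_f)
  finally have fin_K: "(\<integral>\<^sup>+p. ennreal (f (fst p) * \<bar>K (snd p)\<bar>) \<partial>(lborel \<Otimes>\<^sub>M lborel)) < \<infinity>"
    by simp
  have e3: "0 < ennreal (e / 3)" using e by simp
  have "\<exists>R>0. \<forall>R'\<ge>R. (\<integral>\<^sup>+x. ennreal (f x) * indicator {x. R' < \<bar>x\<bar>} x \<partial>lborel) < ennreal (e / 3)"
    by (rule nn_integral_small_tail) (measurable, measurable, rule fin_f, rule e3)
  then obtain R1 where R1: "0 < R1" "\<And>R. R1 \<le> R \<Longrightarrow> tail_f R < ennreal (e / 3)"
    unfolding tail_f_def by auto
  have "\<exists>R>0. \<forall>R'\<ge>R. tail_K H R' < ennreal (e / 3)"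
    unfolding tail_K_def
    by (rule nn_integral_small_tail[where \<phi>="\<lambda>p. \<bar>fst p\<bar> + H * \<bar>snd p\<bar>"])
       (measurable, measurable, rule fin_K, rule e3)
  then obtain R2 where R2: "0 < R2" "\<And>R. R2 \<le> R \<Longrightarrow> tail_K H R < ennreal (e / 3)"
    by auto
  let ?R = "max R1 R2"
  have "tail_K H ?R + tail_f ?R \<le> ennreal (e / 3) + ennreal (e / 3)"
    using R1(2)[of ?R] R2(2)[of ?R] by (intro add_mono) auto
  also have "\<dots> < ennreal e"
    using e by (simp add: ennreal_plus[symmetric] ennreal_lessI del: ennreal_plus)
  finally show ?thesis using R1(1) by (intro exI[of _ ?R]) auto
qed

end

section \<open>The bias is bounded away from zero when S_K = 0\<close>

context kde_setting
begin

lemma char_fun_K_zero: "char_fun K 0 = 1"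
  unfolding char_fun_def using K_one by (simp add: integral_complex_of_real)

text \<open>S_K = 0 provides frequencies s arbitrarily close to 0 with \<phi>_K(s) \<noteq> 1; the set in the
  definition of S_K is nonempty because \<phi>_K is not identically 1.\<close>
lemma small_frequency:
  assumes SK: "S_K K = 0" and e: "0 < e"
  shows "\<exists>s. 0 < s \<and> s < e \<and> char_fun K s \<noteq> 1"
proof -
  let ?A = "{t. 0 \<le> t \<and> cmod (char_fun K t - 1) \<noteq> 0}"
  have ne: "?A \<noteq> {}" using char_fun_not_identically_one[OF K_int] by auto
  have "Inf ?A < e" using SK e by (simp add: S_K_def)
  then obtain s where s: "s \<in> ?A" "s < e"
    using cInf_less_iff[OF ne bdd_belowI[of ?A 0]] by auto
  moreover have "s \<noteq> 0" using s(1) char_fun_K_zero by auto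
  ultimately show ?thesis by (intro exI[of _ s]) auto
qed

text \<open>At the frequency t = s/h the Fourier transform of the bias has modulus at least
  |\<phi>_K(s) - 1| / 2, which bounds the L1 norm of the bias from below.\<close>
lemma bias_L1_lower:
  assumes h: "0 < h" and r: "\<And>u. \<bar>u\<bar> \<le> r \<Longrightarrow> 1 / 2 \<le> cmod (char_fun f u)"
    and s: "\<bar>s\<bar> \<le> r * h"
  shows "ennreal (cmod (char_fun K s - 1) / 2) \<le> (\<integral>\<^sup>+x. ennreal \<bar>bias h x\<bar> \<partial>lborel)"
proof -
  have "\<bar>s / h\<bar> \<le> r" using s h by (simp add: abs_divide divide_le_eq)
  then have "1 / 2 * cmod (char_fun K s - 1) \<le> cmod (char_fun f (s / h)) * cmod (char_fun K s - 1)"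
    by (intro mult_right_mono r) auto
  also have "\<dots> = cmod (char_fun (bias h) (s / h))"
    using h by (simp add: char_fun_bias norm_mult)
  finally have "ennreal (cmod (char_fun K s - 1) / 2) \<le> ennreal (cmod (char_fun (bias h) (s / h)))"
    by (intro ennreal_leI) simp
  also have "\<dots> \<le> (\<integral>\<^sup>+x. ennreal \<bar>bias h x\<bar> \<partial>lborel)" by (rule char_fun_norm_le)
  finally show ?thesis .
qed

lemma bias_sq_lower_compact:
  assumes SK: "S_K K = 0" and \<delta>: "0 < \<delta>"
  shows "\<exists>c>0. \<forall>h. \<delta> \<le> h \<and> h \<le> H \<longrightarrow> ennreal c \<le> (\<integral>\<^sup>+x. ennreal ((bias h x)\<^sup>2) \<partial>lborel)"
proof -
  obtain r where r: "0 < r" "\<And>u. \<bar>u\<bar> \<le> r \<Longrightarrow> 1 / 2 \<le> cmod (char_fun f u)"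
    using char_fun_f_near_zero by blast
  obtain s where s: "0 < s" "s < r * \<delta>" "char_fun K s \<noteq> 1"
    using small_frequency[OF SK, of "r * \<delta>"] r(1) \<delta> by auto
  define \<eta> where "\<eta> = cmod (char_fun K s - 1) / 2"
  have \<eta>: "0 < \<eta>" using s(3) by (simp add: \<eta>_def)
  obtain R where R: "0 < R" "tail_K H R + tail_f R < ennreal (\<eta> / 3)"
    using uniform_tail_small[of "\<eta> / 3" H] \<eta> by auto
  have "ennreal (2 * \<eta>\<^sup>2 / (9 * R)) \<le> (\<integral>\<^sup>+x. ennreal ((bias h x)\<^sup>2) \<partial>lborel)" if h: "\<delta> \<le> h" "h \<le> H" for h
  proof (rule L2_lower_bound_from_L1[OF _ \<eta> R(1)])
    have h0: "0 < h" using h \<delta> by simp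
    show "bias h \<in> borel_measurable borel" by (rule bias_meas[OF h0])
    have "\<bar>s\<bar> \<le> r * h" using s(1,2) h(1) r(1) by (smt (verit) mult_left_mono)
    then show "ennreal \<eta> \<le> (\<integral>\<^sup>+x. ennreal \<bar>bias h x\<bar> \<partial>lborel)"
      using bias_L1_lower[OF h0 r(2)] by (simp add: \<eta>_def)
    show "(\<integral>\<^sup>+x. ennreal \<bar>bias h x\<bar> * indicator {x. R < \<bar>x\<bar>} x \<partial>lborel) < ennreal (\<eta> / 3)"
      using bias_tail_le[OF h0 h(2)] R(2) by (rule le_less_trans)
  qed
  then show ?thesis using \<eta> R(1) by (intro exI[of _ "2 * \<eta>\<^sup>2 / (9 * R)"]) auto
qed

text \<open>Lower bound for the integrated squared bias, uniformly for h \<ge> \<delta>: for large h it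
  follows from the bound for large bandwidths, on the remaining compact range from the
  previous lemma.\<close>
lemma bias_sq_lower:
  assumes SK: "S_K K = 0" and \<delta>: "0 < \<delta>"
  shows "\<exists>c>0. \<forall>h\<ge>\<delta>. ennreal c \<le> (\<integral>\<^sup>+x. ennreal ((bias h x)\<^sup>2) \<partial>lborel)"
proof -
  define H where "H = 4 * nK2 / nf2"
  obtain c where c: "0 < c" "\<And>h. \<delta> \<le> h \<Longrightarrow> h \<le> H \<Longrightarrow> ennreal c \<le> (\<integral>\<^sup>+x. ennreal ((bias h x)\<^sup>2) \<partial>lborel)"
    using bias_sq_lower_compact[OF SK \<delta>, of H] by auto
  have large: "ennreal (nf2 / 4) \<le> (\<integral>\<^sup>+x. ennreal ((bias h x)\<^sup>2) \<partial>lborel)" if h: "H < h" for h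
  proof -
    have "0 < H" using nK2_pos nf2_pos by (simp add: H_def)
    then have h0: "0 < h" using h by simp
    have "nK2 / h \<le> nf2 / 4"
      using h h0 nf2_pos by (simp add: H_def divide_le_eq field_simps)
    then have "ennreal (nf2 / 2) \<le> (\<integral>\<^sup>+x. ennreal ((bias h x)\<^sup>2) \<partial>lborel) + ennreal (nf2 / 4)"
      using bias_sq_ge_large_bandwidth[OF h0] by (meson add_left_mono ennreal_leI order_trans)
    then have "ennreal (nf2 / 2 - nf2 / 4) \<le> (\<integral>\<^sup>+x. ennreal ((bias h x)\<^sup>2) \<partial>lborel)"
      by (rule ennreal_diff_le[rotated]) (use nf2_pos in simp)
    then show ?thesis by simp
  qed
  have "ennreal (min c (nf2 / 4)) \<le> ennreal c" "ennreal (min c (nf2 / 4)) \<le> ennreal (nf2 / 4)"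
    by (auto intro: ennreal_leI)
  then have "ennreal (min c (nf2 / 4)) \<le> (\<integral>\<^sup>+x. ennreal ((bias h x)\<^sup>2) \<partial>lborel)" if "\<delta> \<le> h" for h
    using c(2)[OF that] large[of h] by (meson not_le order_trans)
  then show ?thesis using c(1) nf2_pos by (intro exI[of _ "min c (nf2 / 4)"]) auto
qed

text \<open>Uniformly in h > 0, n * MISE exceeds any given level once n is large: small h by
  the variance bound, the remaining h by the bias bound.\<close>
lemma scaled_MISE_unbounded:
  assumes SK: "S_K K = 0"
  shows "\<exists>N. \<forall>n\<ge>N. \<forall>h>0. ennreal Z \<le> of_nat n * MISE n f K h"
proof (cases "0 \<le> Z")
  case False
  then show ?thesis by (intro exI[of _ 0]) (simp add: ennreal_neg)
next
  case Z: True
  define \<delta> where "\<delta> = nK2 / (2 * (Z + nf2))"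
  have \<delta>: "0 < \<delta>" using nK2_pos nf2_pos Z by (simp add: \<delta>_def)
  obtain c where c: "0 < c" "\<And>h. \<delta> \<le> h \<Longrightarrow> ennreal c \<le> (\<integral>\<^sup>+x. ennreal ((bias h x)\<^sup>2) \<partial>lborel)"
    using bias_sq_lower[OF SK \<delta>] by auto
  define N where "N = max 1 (nat \<lceil>Z / c\<rceil>)"
  have "ennreal Z \<le> of_nat n * MISE n f K h" if n: "N \<le> n" and h: "0 < h" for n h
  proof (cases "h < \<delta>")
    case True
    have n0: "0 < n" using n by (simp add: N_def)
    have "Z + nf2 \<le> nK2 / (2 * h)"
      using True h nf2_pos Z by (simp add: \<delta>_def field_simps)
    then have "ennreal (Z + nf2) \<le> of_nat n * MISE n f K h + ennreal nf2"
      using scaled_MISE_ge_variance[OF n0 h] by (meson ennreal_leI order_trans)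
    then show ?thesis using ennreal_diff_le[of nf2 "Z + nf2"] nf2_pos by simp
  next
    case False
    have n0: "0 < n" using n by (simp add: N_def)
    have "Z / c \<le> real (nat \<lceil>Z / c\<rceil>)" by linarith
    also have "\<dots> \<le> real n" using n by (simp add: N_def)
    finally have "Z / c \<le> real n" .
    then have "Z \<le> real n * c" using c(1) by (simp add: divide_le_eq mult.commute)
    then have "ennreal Z \<le> of_nat n * ennreal c"
      using c(1) by (simp add: ennreal_of_nat_eq_real_of_nat ennreal_mult[symmetric] ennreal_leI del: ennreal_mult')
    also have "\<dots> \<le> of_nat n * (\<integral>\<^sup>+x. ennreal ((bias h x)\<^sup>2) \<partial>lborel)"
      using c(2)[of h] False by (intro mult_left_mono) auto
    also have "\<dots> \<le> of_nat n * MISE n f K h" by (rule scaled_MISE_ge_bias[OF n0 h])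
    finally show ?thesis .
  qed
  then show ?thesis by blast
qed

end

lemma tendsto_top_scaled_INF:
  fixes F :: "nat \<Rightarrow> 'a \<Rightarrow> ennreal"
  assumes unbounded: "\<And>Z. \<exists>N. \<forall>n\<ge>N. \<forall>h\<in>A. ennreal Z \<le> of_nat n * F n h"
  shows "((\<lambda>n. of_nat n * (INF h\<in>A. F n h)) \<longlongrightarrow> \<infinity>) sequentially"
  unfolding infinity_ennreal_def tendsto_top_iff_ennreal
proof (intro allI impI)
  fix z :: real assume z: "0 \<le> z"
  obtain N where N: "\<And>n h. N \<le> n \<Longrightarrow> h \<in> A \<Longrightarrow> ennreal (z + 1) \<le> of_nat n * F n h"
    using unbounded[of "z + 1"] by blast
  have "ennreal (z + 1) \<le> of_nat n * (INF h\<in>A. F n h)" if n: "max N 1 \<le> n" for n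
  proof -
    have n_fin: "(of_nat n :: ennreal) \<noteq> 0" "(of_nat n :: ennreal) \<noteq> \<top>" using n by auto
    have scale: "(of_nat n :: ennreal) * ennreal ((z + 1) / real n) = ennreal (z + 1)"
      using n z by (simp add: ennreal_of_nat_eq_real_of_nat ennreal_mult[symmetric] del: ennreal_mult')
    have "ennreal ((z + 1) / real n) \<le> (INF h\<in>A. F n h)"
    proof (rule INF_greatest)
      fix h assume "h \<in> A"
      then have "of_nat n * ennreal ((z + 1) / real n) \<le> of_nat n * F n h" using N[of n h] n by (simp add: scale)
      then show "ennreal ((z + 1) / real n) \<le> F n h" using ennreal_mult_le_mult_iff[OF n_fin] by simp
    qed
    then have "of_nat n * ennreal ((z + 1) / real n) \<le> of_nat n * (INF h\<in>A. F n h)" by (rule mult_left_mono) simp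
    then show ?thesis by (simp add: scale)
  qed
  moreover have "ennreal z < ennreal (z + 1)" using z by (simp add: ennreal_lessI)
  ultimately show "\<forall>\<^sub>F n in sequentially. ennreal z < of_nat n * (INF h\<in>A. F n h)"
    unfolding eventually_sequentially by (meson order_less_le_trans)
qed

theorem lemma2:
  fixes K f :: "real \<Rightarrow> real"
  assumes "is_kernel K"
    and "integrable lborel (\<lambda>x. (K x)\<^sup>2)"
    and "S_K K = 0"
    and "is_density f"
    and "integrable lborel (\<lambda>x. (f x)\<^sup>2)"
  shows "((\<lambda>n. of_nat n * Phi n f K) \<longlongrightarrow> \<infinity>) sequentially"
proof -
  interpret kde_setting K f using assms by (simp add: kde_setting_def)
  have "\<exists>N. \<forall>n\<ge>N. \<forall>h\<in>{0<..}. ennreal Z \<le> of_nat n * MISE n f K h" for Z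
    using scaled_MISE_unbounded[OF \<open>S_K K = 0\<close>, of Z] by auto
  then show ?thesis unfolding Phi_def by (rule tendsto_top_scaled_INF)
qed

end
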